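(* For every integer $n\ge1$, $$\frac{\beta(n)}{n}=\frac{\pi^2}{15}\sum_{r=1}^{\infty}\frac{\lambda(r)}{r^2}c_r(n),$$ the series being absolutely convergent.
   Context: $\lambda(n)=(-1)^{\Omega(n)}$ is the Liouville function, $\Omega(n)$ being the number of prime factors of $n$ counted with multiplicity. $\beta(n)=\sum_{d\mid n}d\,\lambda(n/d)$ (equivalently, $\beta$ is multiplicative with $\beta(p^a)=\frac{p^{a+1}+(-1)^a}{p+1}$). $c_r(n)$ is the Ramanujan sum, the sum of the $n$-th powers of the primitive $r$-th roots of unity. *)

theory Defs
  imports "HOL-Analysis.Analysis" "HOL-Computational_Algebra.Primes"
begin

definition liouville :: "nat \<Rightarrow> real" where
  "liouville n = (-1) ^ size (prime_factorization n)"

definition beta :: "nat \<Rightarrow> real" where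
  "beta n = (\<Sum>d | d dvd n. real d * liouville (n div d))"

definition ramanujan_sum :: "nat \<Rightarrow> nat \<Rightarrow> complex" where
  "ramanujan_sum r n =
     (\<Sum>k | k \<in> {1..r} \<and> coprime k r. (cis (2 * pi * real k / real r)) ^ n)"

end

theory Submission
  imports Defs "HOL-Real_Asymp.Real_Asymp" "HOL-Computational_Algebra.Squarefree"
begin

(* Write mu for the Moebius function.
   (1) zeta(4) = pi^4/90, obtained from the second-order term of Euler's product
       sin(pi x)/(pi x) = prod_k (1 - x^2/k^2), exactly as the library obtains zeta(2).
   (2) Every k >= 1 is uniquely m*j^2 with m squarefree, so zeta(2) = zeta(4) * sum over
       squarefree m of 1/m^2, i.e. that sum equals 15/pi^2.
   (3) Kluyver's formula c_r(n) = sum over e dividing gcd(r,n) of e * mu(r/e), from the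
       Moebius inversion of the coprimality indicator and sums of roots of unity.
   (4) Exchanging the (absolutely convergent) sum over r with the finite sum over e | n and
       writing r = e*m, the e-part of the series is lambda(e)/e * sum_m lambda(m) mu(m)/m^2
       = lambda(e)/e * 15/pi^2, since lambda(m) mu(m) is the indicator of squarefree m.
   (5) Finally beta(n)/n = sum over e | n of lambda(e)/e, which gives the theorem.
   Everything is done with unconditional sums (has_sum) over the naturals, which yields
   absolute convergence of the series for free. *)

section \<open>The value of zeta(4)\<close>

lemma inverse_squares_sums_Suc: "(\<lambda>n. 1 / real (Suc n)^2) sums (pi^2/6)"
  using inverse_squares_sums by (simp add: add.commute)

lemma inverse_squares_summable_Suc: "summable (\<lambda>n. 1 / real (Suc n)^2)"
  using inverse_squares_sums_Suc sums_summable by blast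

text \<open>Partial Euler products of sin(pi x)/(pi x), and the coefficient series that measures
  their deviation from 1: \<open>euler_prod x n = 1 - x^2 * euler_rem x n\<close>.\<close>

definition euler_prod :: "real \<Rightarrow> nat \<Rightarrow> real" where
  "euler_prod x n = (\<Prod>k=1..n. 1 - x^2 / of_nat k^2)"

definition euler_rem :: "real \<Rightarrow> nat \<Rightarrow> real" where
  "euler_rem x n = (\<Sum>k<n. euler_prod x k / of_nat (Suc k)^2)"

lemma euler_prod_Suc: "euler_prod x (Suc n) = euler_prod x n * (1 - x^2 / of_nat (Suc n)^2)"
  unfolding euler_prod_def by (subst prod.nat_ivl_Suc') (auto simp: mult.commute)

lemma euler_prod_eq_rem: "euler_prod x n = 1 - x^2 * euler_rem x n"
proof (induction n)
  case 0
  then show ?case by (simp add: euler_prod_def euler_rem_def)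
next
  case (Suc n)
  have "euler_prod x (Suc n) = euler_prod x n - x^2 * (euler_prod x n / of_nat (Suc n)^2)"
    by (simp add: euler_prod_Suc algebra_simps)
  also have "\<dots> = 1 - x^2 * euler_rem x (Suc n)"
    using Suc by (simp add: euler_rem_def algebra_simps)
  finally show ?case .
qed

lemma euler_rem_0: "euler_rem 0 n = (\<Sum>k<n. 1 / real (Suc k)^2)"
  by (simp add: euler_rem_def euler_prod_def)

text \<open>For \<open>|x| < 1\<close> all factors lie in [0, 1], which gives uniform bounds.\<close>

lemma euler_prod_bounds:
  assumes "\<bar>x\<bar> < 1"
  shows "0 \<le> euler_prod x n \<and> euler_prod x n \<le> 1"
proof -
  have factor: "0 \<le> 1 - x^2 / of_nat k^2 \<and> 1 - x^2 / of_nat k^2 \<le> 1" if "k \<ge> 1" for k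
  proof -
    have "x^2 < 1" using assms by (simp add: abs_square_less_1)
    also have "1 \<le> (of_nat k::real)^2" using that by simp
    finally have "x^2 / of_nat k^2 \<le> 1" by (auto simp: divide_le_eq_1)
    then show ?thesis by simp
  qed
  then show ?thesis unfolding euler_prod_def by (auto intro!: prod_nonneg prod_le_1)
qed

lemma euler_rem_bounds:
  assumes "\<bar>x\<bar> < 1"
  shows "0 \<le> euler_rem x n \<and> euler_rem x n \<le> pi^2/6"
proof -
  have "euler_rem x n \<le> (\<Sum>k<n. 1 / real (Suc k)^2)"
    unfolding euler_rem_def using euler_prod_bounds[OF assms]
    by (intro sum_mono) (simp add: divide_right_mono)
  also have "\<dots> \<le> pi^2/6"
    using sum_le_suminf[OF inverse_squares_summable_Suc, of "{..<n}"] inverse_squares_sums_Suc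
    by (simp add: sums_iff)
  finally show ?thesis
    unfolding euler_rem_def using euler_prod_bounds[OF assms] by (auto intro!: sum_nonneg)
qed

text \<open>Telescoping against Euler's product formula for the sine.\<close>

lemma euler_prod_series_sums:
  assumes "x \<noteq> 0"
  shows "(\<lambda>n. euler_prod x n / of_nat (Suc n)^2) sums ((1 - sin (pi * x) / (pi * x)) / x^2)"
proof -
  have "(\<lambda>n. euler_prod x n - euler_prod x (Suc n)) sums (euler_prod x 0 - sin (pi * x) / (pi * x))"
    unfolding euler_prod_def using assms by (intro telescope_sums' sin_product_formula_real')
  also have "(\<lambda>n. euler_prod x n - euler_prod x (Suc n))
      = (\<lambda>n. x^2 * (euler_prod x n / of_nat (Suc n)^2))"
    by (rule ext) (simp add: euler_prod_Suc algebra_simps)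
  also have "euler_prod x 0 = 1" by (simp add: euler_prod_def)
  finally show ?thesis
    using sums_divide[of _ _ "x^2"] assms by fastforce
qed

text \<open>The second-order coefficient function of the Euler product.  Its value at 0 is
  the double sum whose evaluation gives zeta(4).\<close>

definition euler_series :: "real \<Rightarrow> real" where
  "euler_series x = (\<Sum>n. euler_rem x n / of_nat (Suc n)^2)"

lemma euler_rem_term_bound:
  assumes "\<bar>x\<bar> < 1"
  shows "norm (euler_rem x n / of_nat (Suc n)^2) \<le> pi^2/6 * (1 / real (Suc n)^2)"
proof -
  have "norm (euler_rem x n / of_nat (Suc n)^2) = euler_rem x n / of_nat (Suc n)^2"
    using euler_rem_bounds[OF assms, of n] by simp
  also have "\<dots> \<le> (pi^2/6) / of_nat (Suc n)^2"
    using euler_rem_bounds[OF assms, of n] by (intro divide_right_mono) auto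
  finally show ?thesis by simp
qed

lemma euler_rem_series_summable:
  assumes "\<bar>x\<bar> < 1"
  shows "summable (\<lambda>n. euler_rem x n / of_nat (Suc n)^2)"
  by (rule summable_comparison_test[OF _ summable_mult[OF inverse_squares_summable_Suc]])
     (use euler_rem_term_bound[OF assms] in blast)

text \<open>Away from 0 the coefficient function is explicit: this is the identity
  \<open>\<Sum> 1/(n+1)^2 - x^2 * euler_series x = \<Sum> euler_prod x n/(n+1)^2\<close> solved for it.\<close>

lemma euler_series_eq:
  assumes "\<bar>x\<bar> < 1" "x \<noteq> 0"
  shows "euler_series x = (pi^2/6 - (1 - sin (pi * x) / (pi * x)) / x^2) / x^2"
proof -
  have "(\<lambda>n. 1 / real (Suc n)^2 - x^2 * (euler_rem x n / of_nat (Suc n)^2))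
          sums (pi^2/6 - x^2 * euler_series x)"
    unfolding euler_series_def
    by (intro sums_diff inverse_squares_sums_Suc sums_mult summable_sums
          euler_rem_series_summable assms)
  also have "(\<lambda>n. 1 / real (Suc n)^2 - x^2 * (euler_rem x n / of_nat (Suc n)^2))
      = (\<lambda>n. euler_prod x n / of_nat (Suc n)^2)"
    by (rule ext) (simp add: euler_prod_eq_rem diff_divide_distrib)
  finally have "(1 - sin (pi * x) / (pi * x)) / x^2 = pi^2/6 - x^2 * euler_series x"
    using euler_prod_series_sums[OF assms(2)] sums_unique2 by blast
  then show ?thesis using assms(2) by (simp add: field_simps)
qed

text \<open>Uniform convergence on the unit ball (Weierstrass M-test) gives continuity at 0.\<close>

lemma euler_series_continuous: "continuous_on (ball 0 1) euler_series"
proof (rule uniform_limit_theorem; (intro always_eventually allI)?)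
  show "uniform_limit (ball 0 1) (\<lambda>n x. \<Sum>k<n. euler_rem x k / of_nat (Suc k)^2)
          euler_series sequentially"
    unfolding euler_series_def
  proof (rule Weierstrass_m_test)
    show "summable (\<lambda>n. pi^2/6 * (1 / real (Suc n)^2))"
      by (intro summable_mult inverse_squares_summable_Suc)
  qed (use euler_rem_term_bound in auto)
qed (auto simp: euler_rem_def euler_prod_def intro!: continuous_intros)

text \<open>The fourth Taylor coefficient of sin y / y, in the shape in which it is needed.\<close>

lemma sinc_fourth_order_limit:
  "((\<lambda>y::real. (1/6 - (1 - sin y / y) / y^2) / y^2) \<longlongrightarrow> 1/120) (at 0)"
proof -
  have "((\<lambda>y::real. (1/6 - (1 - sin y / y) / y^2) / y^2) \<longlongrightarrow> 1/120) (at_right 0)"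
    by real_asymp
  moreover have "((\<lambda>y::real. (1/6 - (1 - sin y / y) / y^2) / y^2) \<longlongrightarrow> 1/120) (at_left 0)"
    by real_asymp
  ultimately show ?thesis by (simp add: filterlim_split_at)
qed

text \<open>Continuity at 0 together with the explicit formula nearby gives the value at 0.\<close>

lemma euler_series_0: "euler_series 0 = pi^4/120"
proof -
  define \<phi> where "\<phi> y = (1/6 - (1 - sin y / y) / y^2) / y^2" for y :: real
  have "(\<lambda>x. \<phi> (pi * x)) \<midarrow>0\<rightarrow> 1/120"
  proof (rule LIM_compose2[OF _ sinc_fourth_order_limit[folded \<phi>_def]])
    show "(\<lambda>x. pi * x) \<midarrow>0\<rightarrow> 0" by (auto intro!: tendsto_eq_intros)
    show "\<exists>d>0. \<forall>x::real. x \<noteq> 0 \<and> norm (x - 0) < d \<longrightarrow> pi * x \<noteq> 0"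
      by (intro exI[of _ 1]) simp
  qed
  then have "(\<lambda>x. pi^4 * \<phi> (pi * x)) \<midarrow>0\<rightarrow> pi^4/120"
    using tendsto_mult_left by fastforce
  moreover have "\<forall>\<^sub>F x in at 0. pi^4 * \<phi> (pi * x) = euler_series x"
  proof -
    have "\<forall>\<^sub>F x in at (0::real). \<bar>x\<bar> < 1 \<and> x \<noteq> 0"
      unfolding eventually_at by (intro exI[of _ 1]) (auto simp: dist_real_def)
    then show ?thesis
    proof eventually_elim
      case (elim x)
      then have "euler_series x = (pi^2/6 - (1 - sin (pi * x) / (pi * x)) / x^2) / x^2"
        by (intro euler_series_eq) auto
      also have "\<dots> = pi^4 * \<phi> (pi * x)"
        using elim pi_gt_zero
        by (simp add: \<phi>_def field_simps power2_eq_square power4_eq_xxxx)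
      finally show ?case by simp
    qed
  qed
  ultimately have "euler_series \<midarrow>0\<rightarrow> pi^4/120"
    by (rule Lim_transform_eventually)
  moreover have "euler_series \<midarrow>0\<rightarrow> euler_series 0"
    using euler_series_continuous by (simp add: continuous_on_eq_continuous_at isCont_def)
  ultimately show ?thesis using LIM_unique by blast
qed

text \<open>Squaring a partial sum of zeta(2) splits it into the diagonal (a partial sum of
  zeta(4)) and twice the off-diagonal part, which is a partial sum of \<open>euler_series 0\<close>.\<close>

lemma square_of_inverse_squares_partial_sum:
  fixes H :: "nat \<Rightarrow> real"
  defines "H \<equiv> \<lambda>n. \<Sum>k<n. 1 / real (Suc k)^2"
  shows "H N ^ 2 = (\<Sum>n<N. 2 * (H n / real (Suc n)^2) + 1 / real (Suc n)^4)"
proof (induction N)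
  case 0
  then show ?case by (simp add: H_def)
next
  case (Suc N)
  have "H (Suc N) = H N + 1 / real (Suc N)^2" by (simp add: H_def)
  then have "H (Suc N)^2 = H N^2 + 2 * (H N / real (Suc N)^2) + 1 / real (Suc N)^4"
    by (simp add: power2_eq_square power4_eq_xxxx algebra_simps)
  then show ?case using Suc by simp
qed

text \<open>zeta(4) = zeta(2)^2 - 2 * euler_series 0 = pi^4/36 - pi^4/60 = pi^4/90.\<close>

theorem inverse_fourth_powers_sums: "(\<lambda>n. 1 / real (Suc n)^4) sums (pi^4/90)"
proof -
  define H where "H n = (\<Sum>k<n. 1 / real (Suc k)^2)" for n
  have "(\<lambda>n. H n / real (Suc n)^2) sums euler_series 0"
    using summable_sums[OF euler_rem_series_summable[of 0]]
    by (simp add: euler_series_def euler_rem_0 H_def)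
  then have "(\<lambda>n. H n / real (Suc n)^2) sums (pi^4/120)"
    by (simp only: euler_series_0)
  then have off_diag: "(\<lambda>N. \<Sum>n<N. 2 * (H n / real (Suc n)^2)) \<longlonglongrightarrow> 2 * (pi^4/120)"
    using sums_mult unfolding sums_def by blast
  have "H \<longlonglongrightarrow> pi^2/6"
    using inverse_squares_sums_Suc unfolding sums_def H_def .
  then have "(\<lambda>N. H N ^ 2 - (\<Sum>n<N. 2 * (H n / real (Suc n)^2))) \<longlonglongrightarrow> (pi^2/6)^2 - 2 * (pi^4/120)"
    by (intro tendsto_intros off_diag)
  also have "(\<lambda>N. H N ^ 2 - (\<Sum>n<N. 2 * (H n / real (Suc n)^2))) = (\<lambda>N. \<Sum>n<N. 1 / real (Suc n)^4)"
  proof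
    fix N
    have "H N ^ 2 = (\<Sum>n<N. 2 * (H n / real (Suc n)^2) + 1 / real (Suc n)^4)"
      unfolding H_def by (rule square_of_inverse_squares_partial_sum)
    then show "H N ^ 2 - (\<Sum>n<N. 2 * (H n / real (Suc n)^2)) = (\<Sum>n<N. 1 / real (Suc n)^4)"
      by (simp only: sum.distrib)
  qed
  also have "(pi^2/6)^2 - 2 * (pi^4/120) = pi^4/90"
    by (simp add: power2_eq_square power4_eq_xxxx field_simps)
  finally show ?thesis unfolding sums_def .
qed

section \<open>The sum of 1/m^2 over the squarefree numbers\<close>

lemma squarefree_nat_pos: "squarefree (m::nat) \<Longrightarrow> m > 0"
  by (cases m) auto

lemma squarefree_square_decomposition_unique:
  fixes m j :: nat
  assumes m: "squarefree m" and j: "j > 0"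
  shows "squarefree_part (m * j^2) = m \<and> square_part (m * j^2) = j"
proof -
  have m0: "m \<noteq> 0" using squarefree_nat_pos[OF m] by simp
  have mult: "multiplicity p (m * j^2) = multiplicity p m + 2 * multiplicity p j"
    if "prime p" for p
    using that m0 j
    by (simp add: prime_elem_multiplicity_mult_distrib prime_elem_multiplicity_power_distrib)
  have le: "multiplicity p m \<le> 1" if "prime p" for p
    using m m0 that squarefree_factorial_semiring'' by blast
  have "normalize (square_part (m * j^2)) = normalize j"
  proof (rule multiplicity_eq_imp_eq)
    fix p :: nat assume p: "prime p"
    show "multiplicity p (square_part (m * j^2)) = multiplicity p j"
      using mult[OF p] le[OF p] by (simp add: prime_multiplicity_square_part[OF p])
  qed (use m0 j in simp_all)
  moreover have "normalize (squarefree_part (m * j^2)) = normalize m"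
  proof (rule multiplicity_eq_imp_eq)
    fix p :: nat assume p: "prime p"
    show "multiplicity p (squarefree_part (m * j^2)) = multiplicity p m"
      using mult[OF p] le[OF p] by (simp add: prime_multiplicity_squarefree_part[OF p])
  qed (use m0 in simp_all)
  ultimately show ?thesis by simp
qed

lemma nonneg_sums_Suc_imp_has_sum:
  fixes f :: "nat \<Rightarrow> real"
  assumes "(\<lambda>n. f (Suc n)) sums s" "\<And>n. f n \<ge> 0"
  shows "(f has_sum s) {k. k > 0}"
proof -
  have "((\<lambda>n. f (Suc n)) has_sum s) UNIV"
    by (rule sums_nonneg_imp_has_sum) (use assms in auto)
  moreover have "((\<lambda>n. f (Suc n)) has_sum s) UNIV \<longleftrightarrow> (f has_sum s) {k. k > 0}"
    by (rule has_sum_reindex_bij_witness[where i="\<lambda>k. k - 1" and j=Suc]) auto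
  ultimately show ?thesis by simp
qed

text \<open>Summing \<open>1/(m j^2)^2\<close> over squarefree \<open>m\<close> and positive \<open>j\<close> gives zeta(2) on the one hand
  and zeta(4) times the desired sum on the other.\<close>

lemma inverse_squares_squarefree_has_sum:
  "((\<lambda>m::nat. 1 / real m ^ 2) has_sum (15 / pi^2)) {m. squarefree m}"
proof -
  define S where "S = Sigma {m::nat. squarefree m} (\<lambda>_. {j::nat. j > 0})"
  define g where "g = (\<lambda>(m, j). 1 / real (m * j^2)^2)"
  have zeta2: "((\<lambda>k::nat. 1 / real k^2) has_sum pi^2/6) {k. k > 0}"
    by (rule nonneg_sums_Suc_imp_has_sum) (use inverse_squares_sums_Suc in auto)
  have zeta4: "((\<lambda>j::nat. 1 / real j^4) has_sum pi^4/90) {j. j > 0}"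
    by (rule nonneg_sums_Suc_imp_has_sum) (use inverse_fourth_powers_sums in auto)
  have "(g has_sum pi^2/6) S \<longleftrightarrow> ((\<lambda>k::nat. 1 / real k^2) has_sum pi^2/6) {k. k > 0}"
  proof (rule has_sum_reindex_bij_witness[where j="\<lambda>(m, j). m * j^2"
                 and i="\<lambda>k. (squarefree_part k, square_part k)"])
    fix a assume "a \<in> S"
    then obtain m j where a: "a = (m, j)" "squarefree m" "j > 0" unfolding S_def by auto
    then show "(squarefree_part ((\<lambda>(m, j). m * j^2) a), square_part ((\<lambda>(m, j). m * j^2) a)) = a"
      using squarefree_square_decomposition_unique[of m j] by simp
    have "m \<noteq> 0" using a squarefree_nat_pos by auto
    then show "(\<lambda>(m, j). m * j^2) a \<in> {k. k > 0}" using a by simp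
    show "1 / real ((\<lambda>(m, j). m * j^2) a)^2 = g a" using a by (simp add: g_def)
  next
    fix k :: nat assume "k \<in> {k. k > 0}"
    then have "square_part k \<noteq> 0" using square_part_0_iff[of k] by auto
    then show "(squarefree_part k, square_part k) \<in> S"
      unfolding S_def by (simp del: square_part_0_iff)
    show "(\<lambda>(m, j). m * j^2) (squarefree_part k, square_part k) = k"
      by (simp flip: squarefree_decompose)
  qed simp
  with zeta2 have "(g has_sum pi^2/6) S" by simp
  moreover have "((\<lambda>j. g (m, j)) has_sum (1 / real m^2 * (pi^4/90))) {j. j > 0}" for m
    using has_sum_cmult_right[OF zeta4, of "1 / real m^2"]
    by (simp add: g_def power_mult_distrib flip: power_mult)
  ultimately have "((\<lambda>m. 1 / real m^2 * (pi^4/90)) has_sum pi^2/6) {m. squarefree m}"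
    unfolding S_def by (rule has_sum_SigmaD)
  from has_sum_cmult_right[OF this, of "90 / pi^4"] show ?thesis
    by (simp add: field_simps power2_eq_square power4_eq_xxxx)
qed

section \<open>The Liouville and Moebius functions\<close>

lemma liouville_mult: "a \<noteq> 0 \<Longrightarrow> b \<noteq> 0 \<Longrightarrow> liouville (a * b) = liouville a * liouville b"
  by (simp add: liouville_def prime_factorization_mult power_add)

lemma liouville_prime: "prime p \<Longrightarrow> liouville p = -1"
  by (simp add: liouville_def prime_factorization_prime)

lemma liouville_square: "liouville m * liouville m = 1"
  by (simp add: liouville_def flip: power_mult_distrib)

text \<open>On squarefree numbers the number of prime factors counted with multiplicity is the
  number of distinct prime factors, so this is the Moebius function.\<close>

definition moebius :: "nat \<Rightarrow> real" where
  "moebius m = (if squarefree m then liouville m else 0)"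

text \<open>For a prime \<open>p | m\<close>, toggling the factor \<open>p\<close> is a sign-reversing involution on the
  squarefree divisors of \<open>m\<close>.\<close>

lemma moebius_toggle_prime:
  assumes p: "prime p" "p dvd m" and d: "d dvd m" "squarefree d"
  defines "d' \<equiv> (if p dvd d then d div p else d * p)"
  shows "d' dvd m \<and> squarefree d' \<and> (if p dvd d' then d' div p else d' * p) = d
         \<and> moebius d' = - moebius d"
proof (cases "p dvd d")
  case True
  then obtain e where de: "d = p * e" by auto
  have "p \<noteq> 0" using p(1) by auto
  have "e \<noteq> 0" using squarefree_nat_pos[OF d(2)] de by auto
  have "\<not> p dvd e"
  proof
    assume "p dvd e"
    then have "p^2 dvd d" using de by (simp add: power2_eq_square)
    with d(2) p(1) show False by (auto dest: squarefreeD)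
  qed
  moreover have "e dvd m" "squarefree e"
    using d de dvd_trans squarefree_mono[of e d] by auto
  ultimately show ?thesis
    using True de d(2) \<open>p \<noteq> 0\<close> \<open>e \<noteq> 0\<close> p(1)
    by (simp add: d'_def moebius_def liouville_mult liouville_prime)
next
  case False
  have cop: "coprime d p" using prime_imp_coprime[OF p(1) False] by (simp add: coprime_commute)
  have "d \<noteq> 0" "p \<noteq> 0" using squarefree_nat_pos[OF d(2)] p(1) by auto
  moreover have "d * p dvd m" by (rule divides_mult[OF d(1) p(2) cop])
  moreover have "squarefree (d * p)"
    by (rule squarefree_mult_coprime[OF cop d(2) squarefree_prime[OF p(1)]])
  ultimately show ?thesis
    using False d(2) p(1) by (simp add: d'_def moebius_def liouville_mult liouville_prime)
qed

lemma moebius_divisor_sum: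
  assumes "m > 0"
  shows "(\<Sum>d | d dvd m. moebius d) = (if m = 1 then 1 else 0)"
proof (cases "m = 1")
  case True
  then show ?thesis by (simp add: moebius_def liouville_def)
next
  case False
  then obtain p where p: "prime p" "p dvd m" using prime_factor_nat by blast
  define A where "A = {d. d dvd m \<and> squarefree d}"
  define \<sigma> where "\<sigma> d = (if p dvd d then d div p else d * p)" for d
  have \<sigma>: "\<sigma> d \<in> A \<and> \<sigma> (\<sigma> d) = d \<and> moebius (\<sigma> d) = - moebius d" if "d \<in> A" for d
    using moebius_toggle_prime[OF p, of d] that unfolding A_def \<sigma>_def by auto
  have "sum moebius A = sum (\<lambda>d. moebius (\<sigma> d)) A"
    by (rule sum.reindex_bij_witness[where i=\<sigma> and j=\<sigma>]) (use \<sigma> in auto)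
  also have "\<dots> = - sum moebius A"
    using \<sigma> by (simp add: sum_negf)
  finally have "sum moebius A = 0" by simp
  moreover have "(\<Sum>d | d dvd m. moebius d) = sum moebius A"
    by (rule sum.mono_neutral_right)
       (use assms in \<open>auto simp: A_def moebius_def finite_divisors_nat\<close>)
  ultimately show ?thesis using False by simp
qed

lemma coprime_indicator_moebius:
  assumes "r > 0"
  shows "(\<Sum>d | d dvd r. if d dvd k then moebius d else 0) = (if coprime k r then 1 else 0)"
proof -
  have "(\<Sum>d | d dvd r. if d dvd k then moebius d else 0) = (\<Sum>d | d dvd gcd k r. moebius d)"
    using assms by (subst sum.inter_filter[symmetric]) (auto simp: finite_divisors_nat intro: sum.cong)
  also have "\<dots> = (if coprime k r then 1 else 0)"
    using moebius_divisor_sum[of "gcd k r"] assms by (simp add: coprime_iff_gcd_eq_1)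
  finally show ?thesis .
qed

section \<open>Kluyver's formula for Ramanujan sums\<close>

lemma sum_powers_roots_of_unity:
  assumes s: "s > 0"
  shows "(\<Sum>i=1..s. cis (2 * pi * real i / real s) ^ n) = (if s dvd n then of_nat s else 0)"
proof -
  define w where "w = cis (2 * pi * real n / real s)"
  have powers: "cis (2 * pi * real i / real s) ^ n = w ^ i" for i
    unfolding w_def by (simp add: Complex.DeMoivre field_simps)
  have "w ^ s = cis (real s * (2 * pi * real n / real s))"
    unfolding w_def by (rule Complex.DeMoivre)
  also have "\<dots> = cis (2 * pi * real n)" using s by simp
  finally have ws: "w ^ s = 1" by simp
  show ?thesis
  proof (cases "s dvd n")
    case True
    then obtain q where "n = s * q" by auto
    then have "w = 1" using s cis_multiple_2pi[of "real q"] by (simp add: w_def mult_ac)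
    then show ?thesis using True by (simp add: powers)
  next
    case False
    have "w = exp (2 * of_real pi * \<i> * of_nat n / of_nat s)"
      by (simp add: w_def cis_conv_exp mult_ac)
    then have "w \<noteq> 1" using complex_root_unity_eq_1[of s n] s False by simp
    have "(\<Sum>i=1..s. cis (2 * pi * real i / real s) ^ n) = (\<Sum>i<s. w ^ Suc i)"
      unfolding powers One_nat_def by (rule sum.atLeast1_atMost_eq)
    also have "\<dots> = w * ((w ^ s - 1) / (w - 1))"
      using \<open>w \<noteq> 1\<close> by (simp add: geometric_sum flip: sum_distrib_left)
    finally show ?thesis using ws False by simp
  qed
qed

text \<open>The \<open>k \<le> r\<close> divisible by \<open>d\<close> are the \<open>d*i\<close> with \<open>i \<le> s = r/d\<close>, and
  \<open>k/r = i/s\<close>: the \<open>r\<close>-th roots of unity with such exponents are the \<open>s\<close>-th roots of unity.\<close>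

lemma sum_powers_over_multiples:
  assumes rs: "r = d * s" and d: "d > 0" and s: "s > 0"
  shows "(\<Sum>k | k \<in> {1..r} \<and> d dvd k. cis (2 * pi * real k / real r) ^ n)
       = (\<Sum>i=1..s. cis (2 * pi * real i / real s) ^ n)"
proof (rule sym, rule sum.reindex_bij_witness[where i="\<lambda>k. k div d" and j="\<lambda>i. d * i"])
  show "cis (2 * pi * real (d * i) / real r) ^ n = cis (2 * pi * real i / real s) ^ n" for i
    using rs d by (simp add: field_simps)
qed (use rs d in \<open>auto elim!: dvdE\<close>)

text \<open>Expanding the coprimality condition by Moebius inversion and interchanging sums.\<close>

lemma ramanujan_sum_moebius:
  assumes r: "r > 0"
  shows "ramanujan_sum r n
       = (\<Sum>d | d dvd r. of_real (moebius d) * (if (r div d) dvd n then of_nat (r div d) else 0))"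
proof -
  define w where "w k = cis (2 * pi * real k / real r) ^ n" for k
  have "ramanujan_sum r n = (\<Sum>k\<in>{1..r}. if coprime k r then w k else 0)"
    unfolding ramanujan_sum_def w_def by (rule sum.inter_filter) simp
  also have "\<dots> = (\<Sum>k\<in>{1..r}. \<Sum>d | d dvd r. if d dvd k then of_real (moebius d) * w k else 0)"
  proof (rule sum.cong[OF refl])
    fix k
    have "(if coprime k r then w k else 0)
        = of_real (\<Sum>d | d dvd r. if d dvd k then moebius d else 0) * w k"
      by (simp add: coprime_indicator_moebius[OF r])
    also have "\<dots> = (\<Sum>d | d dvd r. if d dvd k then of_real (moebius d) * w k else 0)"
      unfolding of_real_sum sum_distrib_right by (intro sum.cong) auto
    finally show "(if coprime k r then w k else 0) = \<dots>" .
  qed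
  also have "\<dots> = (\<Sum>d | d dvd r. of_real (moebius d) * (\<Sum>k | k \<in> {1..r} \<and> d dvd k. w k))"
    by (subst sum.swap) (simp add: sum.inter_filter[symmetric] sum_distrib_left)
  also have "\<dots> = (\<Sum>d | d dvd r. of_real (moebius d) * (if (r div d) dvd n then of_nat (r div d) else 0))"
  proof (rule sum.cong[OF refl])
    fix d assume "d \<in> {d. d dvd r}"
    then obtain s where rs: "r = d * s" by auto
    then have "d > 0" "s > 0" "r div d = s" using r by auto
    then show "of_real (moebius d) * (\<Sum>k | k \<in> {1..r} \<and> d dvd k. w k)
        = of_real (moebius d) * (if (r div d) dvd n then of_nat (r div d) else 0)"
      unfolding w_def using sum_powers_over_multiples[OF rs] sum_powers_roots_of_unity by simp
  qed
  finally show ?thesis .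
qed

lemma divisor_sum_complement:
  assumes "r > (0::nat)"
  shows "(\<Sum>d | d dvd r. f d) = (\<Sum>e | e dvd r. f (r div e))"
  by (rule sum.reindex_bij_witness[where i="\<lambda>d. r div d" and j="\<lambda>d. r div d"])
     (use assms in \<open>auto elim!: dvdE\<close>)

lemma ramanujan_sum_kluyver:
  assumes r: "r > 0" and n: "n > 0"
  shows "ramanujan_sum r n
       = of_real (\<Sum>e | e dvd n. if e dvd r then real e * moebius (r div e) else 0)"
proof -
  have "ramanujan_sum r n
      = (\<Sum>e | e dvd r. of_real (moebius (r div e)) * (if e dvd n then of_nat e else 0))"
    unfolding ramanujan_sum_moebius[OF r]
    by (subst divisor_sum_complement[OF r]) (intro sum.cong refl, use r in \<open>auto elim!: dvdE\<close>)
  also have "\<dots> = of_real (\<Sum>e | e dvd r \<and> e dvd n. real e * moebius (r div e))"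
    using r by (simp add: of_real_sum sum.inter_filter[symmetric] finite_divisors_nat
        Collect_conj_eq if_distrib mult.commute cong: if_cong)
  also have "(\<Sum>e | e dvd r \<and> e dvd n. real e * moebius (r div e))
      = (\<Sum>e | e dvd n. if e dvd r then real e * moebius (r div e) else 0)"
    using n by (simp add: sum.inter_filter[symmetric] finite_divisors_nat conj_commute)
  finally show ?thesis .
qed

section \<open>Summation of the series\<close>

text \<open>Substituting \<open>d = n/e\<close> in the definition of \<open>\<beta>\<close>.\<close>

lemma beta_div_eq:
  assumes n: "n > 0"
  shows "beta n / real n = (\<Sum>e | e dvd n. liouville e / real e)"
proof -
  have "beta n = (\<Sum>e | e dvd n. real (n div e) * liouville (n div (n div e)))"
    unfolding beta_def by (rule divisor_sum_complement[OF n])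
  also have "\<dots> = real n * (\<Sum>e | e dvd n. liouville e / real e)"
    unfolding sum_distrib_left using n by (intro sum.cong refl) (auto elim!: dvdE)
  finally show ?thesis using n by simp
qed

lemma has_sum_finite_family:
  fixes f :: "'i \<Rightarrow> 'a \<Rightarrow> 'b::topological_comm_monoid_add"
  assumes "finite I" "\<And>i. i \<in> I \<Longrightarrow> (f i has_sum s i) A"
  shows "((\<lambda>x. \<Sum>i\<in>I. f i x) has_sum (\<Sum>i\<in>I. s i)) A"
  using assms by (induction I rule: finite_induct) (auto intro!: has_sum_add)

text \<open>By Kluyver's formula, the \<open>r\<close>-th term of the series is the sum over \<open>e | n\<close> of the
  following contributions.\<close>

definition series_part :: "nat \<Rightarrow> nat \<Rightarrow> real" where
  "series_part e r =
     (if e dvd r then liouville r / real r ^ 2 * (real e * moebius (r div e)) else 0)"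

lemma liouville_ramanujan_term:
  assumes "r > 0" "n > 0"
  shows "complex_of_real (liouville r / real r ^ 2) * ramanujan_sum r n
       = of_real (\<Sum>e | e dvd n. series_part e r)"
  unfolding ramanujan_sum_kluyver[OF assms] series_part_def
  by (simp flip: of_real_mult add: sum_distrib_left if_distrib cong: if_cong)

text \<open>Along \<open>r = e*m\<close> the contribution of \<open>e\<close> factors, because \<open>\<lambda>(m) \<mu>(m)\<close> is the indicator
  of the squarefree numbers.\<close>

lemma series_part_mult:
  assumes e: "e > 0"
  shows "series_part e (e * m) = liouville e / real e * (if squarefree m then 1 / real m ^ 2 else 0)"
proof (cases "m = 0")
  case False
  have "series_part e (e * m)
      = liouville e / real e * ((liouville m * moebius m) / real m ^ 2)"
    using e False
    by (simp add: series_part_def liouville_mult field_simps power2_eq_square)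
  also have "liouville m * moebius m = (if squarefree m then 1 else 0)"
    by (simp add: moebius_def liouville_square)
  finally show ?thesis by simp
qed (simp add: series_part_def)

lemma series_part_has_sum:
  assumes e: "e > 0"
  shows "(series_part e has_sum (liouville e / real e * (15 / pi^2))) UNIV"
proof -
  have sqf: "((\<lambda>m. if squarefree m then 1 / real m ^ 2 else 0) has_sum (15 / pi^2)) UNIV"
    using inverse_squares_squarefree_has_sum
    by (subst has_sum_cong_neutral[where T="{m. squarefree m}" and g="\<lambda>m. 1 / real m ^ 2"]) auto
  have "(series_part e has_sum (liouville e / real e * (15 / pi^2))) UNIV \<longleftrightarrow>
        (series_part e has_sum (liouville e / real e * (15 / pi^2))) (range (\<lambda>m. e * m))"
    by (rule has_sum_cong_neutral) (auto simp: series_part_def)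
  also have "\<dots> \<longleftrightarrow> ((series_part e \<circ> (\<lambda>m. e * m)) has_sum (liouville e / real e * (15 / pi^2))) UNIV"
    by (rule has_sum_reindex) (use e in \<open>auto simp: inj_on_def\<close>)
  finally show ?thesis
    using has_sum_cmult_right[OF sqf, of "liouville e / real e"]
    by (simp add: comp_def series_part_mult[OF e])
qed

lemma liouville_ramanujan_has_sum:
  assumes n: "n > 0"
  shows "((\<lambda>r. \<Sum>e | e dvd n. series_part e r)
           has_sum (15 / pi^2 * (\<Sum>e | e dvd n. liouville e / real e))) UNIV"
proof -
  have "((\<lambda>r. \<Sum>e | e dvd n. series_part e r)
          has_sum (\<Sum>e | e dvd n. liouville e / real e * (15 / pi^2))) UNIV"
    using n by (intro has_sum_finite_family series_part_has_sum)
               (auto simp: finite_divisors_nat intro: dvd_pos_nat)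
  then show ?thesis by (simp add: sum_distrib_left mult.commute)
qed

lemma has_sum_imp_abs_summable_sums_Suc:
  fixes f :: "nat \<Rightarrow> real"
  assumes f: "(f has_sum s) UNIV" and f0: "f 0 = 0"
  shows "summable (\<lambda>r. \<bar>f (Suc r)\<bar>) \<and> (\<lambda>r. f (Suc r)) sums s"
proof
  have "(\<lambda>r. norm (f r)) summable_on UNIV"
    using has_sum_imp_summable[OF f] summable_on_iff_abs_summable_on_real by blast
  then have "summable (\<lambda>r. \<bar>f r\<bar>)"
    by (simp add: summable_on_imp_summable)
  then show "summable (\<lambda>r. \<bar>f (Suc r)\<bar>)"
    by (subst summable_Suc_iff)
  show "(\<lambda>r. f (Suc r)) sums s"
    using has_sum_imp_sums[OF f] f0 by (simp add: sums_Suc_iff)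
qed

theorem mainTheorem4:
  fixes n :: nat
  assumes "n \<ge> 1"
  shows "summable (\<lambda>r. norm (complex_of_real (liouville (Suc r) / real (Suc r) ^ 2)
                                * ramanujan_sum (Suc r) n))
       \<and> complex_of_real (beta n / real n) =
           complex_of_real (pi ^ 2 / 15) *
             (\<Sum>r. complex_of_real (liouville (Suc r) / real (Suc r) ^ 2)
                     * ramanujan_sum (Suc r) n)"
proof -
  have n: "n > 0" using assms by simp
  define T where "T r = (\<Sum>e | e dvd n. series_part e r)" for r
  define B where "B = (\<Sum>e | e dvd n. liouville e / real e)"
  have term_eq: "complex_of_real (liouville (Suc r) / real (Suc r) ^ 2) * ramanujan_sum (Suc r) n
      = of_real (T (Suc r))" for r
    unfolding T_def by (rule liouville_ramanujan_term) (use n in auto)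
  have "T 0 = 0" by (simp add: T_def series_part_def)
  then have abs_summable: "summable (\<lambda>r. \<bar>T (Suc r)\<bar>)" and sums: "(\<lambda>r. T (Suc r)) sums (15 / pi^2 * B)"
    using has_sum_imp_abs_summable_sums_Suc liouville_ramanujan_has_sum[OF n]
    unfolding T_def B_def by blast+
  have "(\<Sum>r. complex_of_real (T (Suc r))) = of_real (15 / pi^2 * B)"
    using sums_of_real[OF sums] by (rule sums_unique[symmetric])
  moreover have "beta n / real n = pi^2 / 15 * (15 / pi^2 * B)"
    using beta_div_eq[OF n] by (simp add: B_def)
  ultimately show ?thesis
    using abs_summable by (simp only: term_eq norm_of_real real_norm_def of_real_mult)
qed

end
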